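(* Let $\gamma$ be a consistent family of grafts for a tree $\mathcal T$ and let $B$ be a branch in $\mathcal H=\mathrm{hybr}(\mathcal T,\gamma)$. (a) If $\mathcal G\in\gamma$ and $B\cap\mathrm{nodes}\,\mathcal G\ne\emptyset$, then $B\cap\mathrm{nodes}\,\mathcal G$ is a branch in $\mathcal G$. (b) If every graft in $\gamma$ has bounded chains, then $B\cap\mathrm{supp}(\mathcal T,\gamma)$ is cofinal in $B$ with respect to $\mathcal H$, i.e. for every $b\in B$ there is $c\in B\cap\mathrm{supp}(\mathcal T,\gamma)$ with $b\le_{\mathcal H}c$.
   Context: A tree is a pair $(Q,<)$ with $<$ irreflexive transitive and each set of predecessors well-ordered; a chain is a set of pairwise comparable nodes, a branch an inclusion-maximal chain; the tree has bounded chains if every nonempty chain $C$ has a node $z$ with $c\le z$ for all $c\in C$; $\max\mathcal T$ = maximal nodes; $A{\downarrow}_{\mathcal T}=\{v:\exists a\in A\ a\le_{\mathcal T}v\}$; $x\parallel_{\mathcal T}y$ means incomparable; for an antichain $A$ and $x\in A{\downarrow}_{\mathcal T}$, $\mathrm{root}_{\mathcal T}(x,A)$ is the unique $r\in A$ with $r\le_{\mathcal T}x$. A graft for $\mathcal T$ is a tree $\mathcal G$ with more than one node, least node $0_{\mathcal G}\in\mathrm{nodes}\,\mathcal T$, with $\max\mathcal G\subseteq\{v\in\mathrm{nodes}\,\mathcal T:v>_{\mathcal T}0_{\mathcal G}\}$ an antichain in $\mathcal T$, and $\mathrm{impl}\,\mathcal G:=\mathrm{nodes}\,\mathcal G\setminus(\{0_{\mathcal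 G}\}\cup\max\mathcal G)$ disjoint from $\mathrm{nodes}\,\mathcal T$; $\mathrm{expl}(\mathcal T,\mathcal G)=\{v:v>_{\mathcal T}0_{\mathcal G}\}\setminus(\max\mathcal G){\downarrow}_{\mathcal T}$. $\gamma$ is a consistent family of grafts for $\mathcal T$ if its members are grafts for $\mathcal T$ with pairwise disjoint implants and for distinct $\mathcal D,\mathcal E\in\gamma$: $0_{\mathcal D}\parallel_{\mathcal T}0_{\mathcal E}$ or $0_{\mathcal D}\in(\max\mathcal E){\downarrow}_{\mathcal T}$ or $0_{\mathcal E}\in(\max\mathcal D){\downarrow}_{\mathcal T}$. $\mathrm{supp}(\mathcal T,\gamma)=\mathrm{nodes}\,\mathcal T\setminus\bigcup_{\mathcal G\in\gamma}\mathrm{expl}(\mathcal T,\mathcal G)$. $\mathrm{hybr}(\mathcal T,\gamma)=(H,<)$ where $H=\mathrm{supp}(\mathcal T,\gamma)\cup\bigcup_{\mathcal G\in\gamma}\mathrm{impl}\,\mathcal G$ and $x<y$ iff: (b1) $x,y\in\mathrm{supp}$, $x<_{\mathcal T}y$; or (b2) $x,y\in\mathrm{impl}\,\mathcal G$, $x<_{\mathcal G}y$ for some $\mathcal G\in\gamma$; or (b3) $x\in\mathrm{supp}$, $y\in\mathrm{impl}\,\mathcal G$, $x\le_{\mathcal T}0_{\mathcal G}$; or (b4) $x\in\mathrm{impl}\,\mathcal G$, $y\in\mathrm{supp}\cap(\max\mathcal G){\downarrow}_{\mathcal T}$, $x<_{\mathcal G}\mathrm{root}_{\mathcal T}(y,\max\mathcal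 G)$; or (b5) for distinct $\mathcal D,\mathcal E\in\gamma$: $x\in\mathrm{impl}\,\mathcal D$, $y\in\mathrm{impl}\,\mathcal E$, $0_{\mathcal E}\in(\max\mathcal D){\downarrow}_{\mathcal T}$, $x<_{\mathcal D}\mathrm{root}_{\mathcal T}(0_{\mathcal E},\max\mathcal D)$. It is a tree. *)

theory Defs
  imports Main
begin

type_synonym 'a tree = "'a set \<times> ('a \<Rightarrow> 'a \<Rightarrow> bool)"

definition nodes :: "'a tree \<Rightarrow> 'a set" where "nodes T = fst T"
definition lt :: "'a tree \<Rightarrow> 'a \<Rightarrow> 'a \<Rightarrow> bool" where "lt T = snd T"
definition le :: "'a tree \<Rightarrow> 'a \<Rightarrow> 'a \<Rightarrow> bool" where
  "le T x y \<longleftrightarrow> lt T x y \<or> (x = y \<and> x \<in> nodes T)"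

definition is_tree :: "'a tree \<Rightarrow> bool" where
  "is_tree T \<longleftrightarrow>
     (\<forall>x y. lt T x y \<longrightarrow> x \<in> nodes T \<and> y \<in> nodes T) \<and>
     (\<forall>x. \<not> lt T x x) \<and>
     (\<forall>x y z. lt T x y \<longrightarrow> lt T y z \<longrightarrow> lt T x z) \<and>
     (\<forall>x \<in> nodes T.
        (\<forall>y z. lt T y x \<longrightarrow> lt T z x \<longrightarrow> y = z \<or> lt T y z \<or> lt T z y) \<and>
        (\<forall>S. S \<subseteq> {y. lt T y x} \<longrightarrow> S \<noteq> {} \<longrightarrow> (\<exists>m\<in>S. \<forall>s\<in>S. \<not> lt T s m)))"

definition incomparable :: "'a tree \<Rightarrow> 'a \<Rightarrow> 'a \<Rightarrow> bool" where
  "incomparable T x y \<longleftrightarrow> \<not> le T x y \<and> \<not> le T y x"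

definition chain :: "'a tree \<Rightarrow> 'a set \<Rightarrow> bool" where
  "chain T C \<longleftrightarrow> C \<subseteq> nodes T \<and> (\<forall>x\<in>C. \<forall>y\<in>C. le T x y \<or> le T y x)"

definition branch :: "'a tree \<Rightarrow> 'a set \<Rightarrow> bool" where
  "branch T B \<longleftrightarrow> chain T B \<and> (\<forall>C. chain T C \<longrightarrow> B \<subseteq> C \<longrightarrow> C = B)"

definition bounded_chains :: "'a tree \<Rightarrow> bool" where
  "bounded_chains T \<longleftrightarrow>
     (\<forall>C. chain T C \<longrightarrow> C \<noteq> {} \<longrightarrow> (\<exists>z\<in>nodes T. \<forall>c\<in>C. le T c z))"

definition maxT :: "'a tree \<Rightarrow> 'a set" where
  "maxT T = {x \<in> nodes T. \<not> (\<exists>y. lt T x y)}"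

definition upclosure :: "'a set \<Rightarrow> 'a tree \<Rightarrow> 'a set" where
  "upclosure A T = {v. \<exists>a\<in>A. le T a v}"

definition antichain :: "'a tree \<Rightarrow> 'a set \<Rightarrow> bool" where
  "antichain T A \<longleftrightarrow> A \<subseteq> nodes T \<and> (\<forall>x\<in>A. \<forall>y\<in>A. x \<noteq> y \<longrightarrow> incomparable T x y)"

definition root :: "'a tree \<Rightarrow> 'a \<Rightarrow> 'a set \<Rightarrow> 'a" where
  "root T x A = (THE r. r \<in> A \<and> le T r x)"

definition zero :: "'a tree \<Rightarrow> 'a" where
  "zero G = (THE z. z \<in> nodes G \<and> (\<forall>v\<in>nodes G. le G z v))"

definition impl :: "'a tree \<Rightarrow> 'a set" where
  "impl G = nodes G - ({zero G} \<union> maxT G)"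

definition is_graft :: "'a tree \<Rightarrow> 'a tree \<Rightarrow> bool" where
  "is_graft T G \<longleftrightarrow>
     is_tree G \<and>
     (\<exists>x\<in>nodes G. \<exists>y\<in>nodes G. x \<noteq> y) \<and>
     (\<exists>z\<in>nodes G. \<forall>v\<in>nodes G. le G z v) \<and>
     zero G \<in> nodes T \<and>
     maxT G \<subseteq> {v \<in> nodes T. lt T (zero G) v} \<and>
     antichain T (maxT G) \<and>
     impl G \<inter> nodes T = {}"

definition expl :: "'a tree \<Rightarrow> 'a tree \<Rightarrow> 'a set" where
  "expl T G = {v. lt T (zero G) v} - upclosure (maxT G) T"

definition consistent :: "'a tree \<Rightarrow> 'a tree set \<Rightarrow> bool" where
  "consistent T \<gamma> \<longleftrightarrow>
     (\<forall>G\<in>\<gamma>. is_graft T G) \<and>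
     (\<forall>D\<in>\<gamma>. \<forall>E\<in>\<gamma>. D \<noteq> E \<longrightarrow>
        impl D \<inter> impl E = {} \<and>
        (incomparable T (zero D) (zero E) \<or>
         zero D \<in> upclosure (maxT E) T \<or>
         zero E \<in> upclosure (maxT D) T))"

definition supp :: "'a tree \<Rightarrow> 'a tree set \<Rightarrow> 'a set" where
  "supp T \<gamma> = nodes T - (\<Union>G\<in>\<gamma>. expl T G)"

definition hybr :: "'a tree \<Rightarrow> 'a tree set \<Rightarrow> 'a tree" where
  "hybr T \<gamma> =
    (supp T \<gamma> \<union> (\<Union>G\<in>\<gamma>. impl G),
     \<lambda>x y.
       (x \<in> supp T \<gamma> \<and> y \<in> supp T \<gamma> \<and> lt T x y) \<or>
       (\<exists>G\<in>\<gamma>. x \<in> impl G \<and> y \<in> impl G \<and> lt G x y) \<or>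
       (\<exists>G\<in>\<gamma>. x \<in> supp T \<gamma> \<and> y \<in> impl G \<and> le T x (zero G)) \<or>
       (\<exists>G\<in>\<gamma>. x \<in> impl G \<and> y \<in> supp T \<gamma> \<and> y \<in> upclosure (maxT G) T \<and>
                lt G x (root T y (maxT G))) \<or>
       (\<exists>D\<in>\<gamma>. \<exists>E\<in>\<gamma>. D \<noteq> E \<and> x \<in> impl D \<and> y \<in> impl E \<and>
                zero E \<in> upclosure (maxT D) T \<and>
                lt D x (root T (zero E) (maxT D))))"

end

theory Submission
  imports Defs
begin

text \<open>
  The hybrid order is governed by a normal form for its strict relation: a support node lies
  below an implant node of a graft \<open>G\<close> iff it lies at or below the root of \<open>G\<close> in \<open>T\<close>, and a step
  up from an implant node of \<open>G\<close> either stays inside \<open>G\<close> or leaves \<open>G\<close> through one of its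
  maximal nodes. Hence the hybrid order is transitive with linearly ordered predecessors, so
  its branches are downward closed, and on the nodes of a graft it coincides with the order of
  the graft.

  (a) If a chain of \<open>G\<close> extended \<open>B \<inter> nodes G\<close> by a node \<open>c \<notin> B\<close>, then \<open>c\<close> would be
  incomparable with some \<open>b \<in> B\<close> lying outside \<open>G\<close> above \<open>B \<inter> nodes G\<close>. But \<open>b\<close> is reached
  from \<open>G\<close> through a maximal node of \<open>G\<close>, which lies in \<open>B\<close> and therefore above \<open>c\<close>.

  (b) An upper bound of the branch \<open>B \<inter> nodes G\<close> of \<open>G\<close> belongs to it and is a maximal node
  of \<open>G\<close>, hence a support node.
\<close>

lemma tree_lt_nodes: "is_tree X \<Longrightarrow> lt X x y \<Longrightarrow> x \<in> nodes X \<and> y \<in> nodes X"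
  unfolding is_tree_def by blast

lemma tree_lt_irrefl: "is_tree X \<Longrightarrow> \<not> lt X x x"
  unfolding is_tree_def by blast

lemma tree_lt_trans: "is_tree X \<Longrightarrow> lt X x y \<Longrightarrow> lt X y z \<Longrightarrow> lt X x z"
  unfolding is_tree_def by blast

lemma tree_lt_asym: "is_tree X \<Longrightarrow> lt X x y \<Longrightarrow> \<not> lt X y x"
  using tree_lt_trans[of X x y x] tree_lt_irrefl[of X x] by blast

lemma tree_pred_linear:
  assumes X: "is_tree X" and yx: "lt X y x" and zx: "lt X z x"
  shows "y = z \<or> lt X y z \<or> lt X z y"
proof -
  have "\<forall>x \<in> nodes X.
        (\<forall>y z. lt X y x \<longrightarrow> lt X z x \<longrightarrow> y = z \<or> lt X y z \<or> lt X z y) \<and>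
        (\<forall>S. S \<subseteq> {y. lt X y x} \<longrightarrow> S \<noteq> {} \<longrightarrow> (\<exists>m\<in>S. \<forall>s\<in>S. \<not> lt X s m))"
    using X unfolding is_tree_def by (elim conjE)
  moreover have "x \<in> nodes X" using tree_lt_nodes[OF X yx] by blast
  ultimately show ?thesis using yx zx by blast
qed

lemma le_refl: "x \<in> nodes X \<Longrightarrow> le X x x"
  unfolding le_def by blast

lemma lt_imp_le: "lt X x y \<Longrightarrow> le X x y"
  unfolding le_def by blast

lemma tree_le_lt_trans: "is_tree X \<Longrightarrow> le X x y \<Longrightarrow> lt X y z \<Longrightarrow> lt X x z"
  unfolding le_def by (metis tree_lt_trans)

lemma tree_lt_le_trans: "is_tree X \<Longrightarrow> lt X x y \<Longrightarrow> le X y z \<Longrightarrow> lt X x z"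
  unfolding le_def by (metis tree_lt_trans)

lemma tree_pred_le_linear: "is_tree X \<Longrightarrow> le X y x \<Longrightarrow> le X z x \<Longrightarrow> le X y z \<or> le X z y"
  unfolding le_def by (metis tree_pred_linear tree_lt_nodes)

lemma branch_memI:
  assumes B: "branch X B" and x: "x \<in> nodes X" and cmp: "\<forall>b\<in>B. le X b x \<or> le X x b"
  shows "x \<in> B"
proof -
  have "chain X (insert x B)"
    using B x cmp le_refl[OF x] unfolding branch_def chain_def by blast
  then show ?thesis using B unfolding branch_def by blast
qed

text \<open>Well-foundedness is not assumed: it is never established for the hybrid.\<close>

lemma branch_downward_closed:
  assumes trans: "\<And>x y z. lt X x y \<Longrightarrow> lt X y z \<Longrightarrow> lt X x z"
    and linear: "\<And>x y z. lt X y x \<Longrightarrow> lt X z x \<Longrightarrow> y = z \<or> lt X y z \<or> lt X z y"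
    and lt_nodes: "\<And>x y. lt X x y \<Longrightarrow> x \<in> nodes X"
    and B: "branch X B" and b: "b \<in> B" and ab: "lt X a b"
  shows "a \<in> B"
proof (rule branch_memI[OF B lt_nodes[OF ab]], intro ballI)
  fix b' assume "b' \<in> B"
  then have "le X b' b \<or> le X b b'" using B b unfolding branch_def chain_def by blast
  then show "le X b' a \<or> le X a b'"
    using ab trans linear[OF ab] lt_nodes[OF ab] unfolding le_def by blast
qed

lemma branch_upper_bound_maxT:
  assumes X: "is_tree X" and B: "branch X B" and z: "z \<in> nodes X" and ub: "\<forall>c\<in>B. le X c z"
  shows "z \<in> B" "z \<in> maxT X"
proof -
  show zB: "z \<in> B" using branch_memI[OF B z] ub by blast
  show "z \<in> maxT X"
    unfolding maxT_def
  proof (intro CollectI conjI notI z)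
    assume "\<exists>y. lt X z y"
    then obtain y where zy: "lt X z y" by blast
    have "le X c y" if "c \<in> B" for c
      using lt_imp_le[OF tree_le_lt_trans[OF X _ zy]] ub that by blast
    moreover have "y \<in> nodes X" using tree_lt_nodes[OF X zy] by blast
    ultimately have "y \<in> B" using branch_memI[OF B] by blast
    then have "le X y z" using ub by blast
    then show False using tree_lt_le_trans[OF X zy] tree_lt_irrefl[OF X] by blast
  qed
qed

lemma maxT_nodes: "m \<in> maxT G \<Longrightarrow> m \<in> nodes G"
  unfolding maxT_def by blast

lemma maxT_not_lt: "m \<in> maxT G \<Longrightarrow> \<not> lt G m y"
  unfolding maxT_def by blast

lemma impl_nodes: "x \<in> impl G \<Longrightarrow> x \<in> nodes G \<and> x \<noteq> zero G \<and> x \<notin> maxT G"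
  unfolding impl_def by blast

locale graft =
  fixes T G :: "'a tree"
  assumes tree_T: "is_tree T" and is_graft: "is_graft T G"
begin

lemma tree_G: "is_tree G"
  using is_graft unfolding is_graft_def by blast

lemma zero_least: "zero G \<in> nodes G \<and> (\<forall>v\<in>nodes G. le G (zero G) v)"
proof -
  obtain z where z: "z \<in> nodes G" "\<forall>v\<in>nodes G. le G z v"
    using is_graft unfolding is_graft_def by blast
  have "z' = z" if "z' \<in> nodes G \<and> (\<forall>v\<in>nodes G. le G z' v)" for z'
    using that z tree_lt_asym[OF tree_G, of z z'] unfolding le_def by blast
  then have "zero G = z"
    unfolding zero_def using z by (intro the_equality) blast+
  then show ?thesis using z by simp
qed

lemma zero_lt: "v \<in> nodes G \<Longrightarrow> v \<noteq> zero G \<Longrightarrow> lt G (zero G) v"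
  using zero_least unfolding le_def by blast

lemma zero_in_T: "zero G \<in> nodes T"
  using is_graft unfolding is_graft_def by blast

lemma maxT_in_T: "m \<in> maxT G \<Longrightarrow> m \<in> nodes T"
  using is_graft unfolding is_graft_def by blast

lemma zero_lt_maxT: "m \<in> maxT G \<Longrightarrow> lt T (zero G) m"
  using is_graft unfolding is_graft_def by blast

lemma maxT_not_le_zero: "m \<in> maxT G \<Longrightarrow> \<not> le T m (zero G)"
  using tree_le_lt_trans[OF tree_T _ zero_lt_maxT] tree_lt_irrefl[OF tree_T] by blast

lemma maxT_antichain: "m \<in> maxT G \<Longrightarrow> m' \<in> maxT G \<Longrightarrow> le T m m' \<Longrightarrow> m = m'"
  using is_graft unfolding is_graft_def antichain_def incomparable_def by blast

lemma maxT_below_unique: "m \<in> maxT G \<Longrightarrow> m' \<in> maxT G \<Longrightarrow> le T m v \<Longrightarrow> le T m' v \<Longrightarrow> m = m'"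
  using maxT_antichain tree_pred_le_linear[OF tree_T] by metis

lemma root_eq: "m \<in> maxT G \<Longrightarrow> le T m v \<Longrightarrow> root T v (maxT G) = m"
  unfolding root_def using maxT_below_unique by (intro the_equality) blast+

lemma impl_not_in_T: "x \<in> impl G \<Longrightarrow> x \<notin> nodes T"
  using is_graft unfolding is_graft_def by blast

lemma nodes_cases: "v \<in> nodes G \<Longrightarrow> v = zero G \<or> v \<in> maxT G \<or> v \<in> impl G"
  unfolding impl_def by blast

end

section \<open>The hybrid order\<close>

locale hybrid =
  fixes T :: "'a tree" and \<Gamma> :: "'a tree set"
  assumes tree_T: "is_tree T" and consistent: "consistent T \<Gamma>"
begin

abbreviation S where "S \<equiv> supp T \<Gamma>"
abbreviation H where "H \<equiv> hybr T \<Gamma>"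

lemma graft_member: "G \<in> \<Gamma> \<Longrightarrow> graft T G"
  using consistent tree_T unfolding consistent_def by unfold_locales blast+

lemma impl_disjoint: "D \<in> \<Gamma> \<Longrightarrow> E \<in> \<Gamma> \<Longrightarrow> x \<in> impl D \<Longrightarrow> x \<in> impl E \<Longrightarrow> D = E"
  using consistent unfolding consistent_def by blast

lemma zeros_related:
  "D \<in> \<Gamma> \<Longrightarrow> E \<in> \<Gamma> \<Longrightarrow> D \<noteq> E \<Longrightarrow> incomparable T (zero D) (zero E) \<or>
    (\<exists>m\<in>maxT E. le T m (zero D)) \<or> (\<exists>m\<in>maxT D. le T m (zero E))"
  using consistent unfolding consistent_def upclosure_def by blast

lemma zero_inj:
  assumes D: "D \<in> \<Gamma>" and E: "E \<in> \<Gamma>" and eq: "zero D = zero E"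
  shows "D = E"
proof (rule ccontr)
  assume "D \<noteq> E"
  moreover have "\<not> incomparable T (zero D) (zero E)"
    using le_refl[OF graft.zero_in_T[OF graft_member[OF D]]] eq unfolding incomparable_def by simp
  ultimately show False
    using zeros_related[OF D E] eq graft.maxT_not_le_zero[OF graft_member[OF D]]
      graft.maxT_not_le_zero[OF graft_member[OF E]] by metis
qed

lemma zero_lt_zero:
  assumes D: "D \<in> \<Gamma>" and E: "E \<in> \<Gamma>" and lt: "lt T (zero D) (zero E)"
  shows "\<exists>m\<in>maxT D. le T m (zero E)"
proof -
  have "D \<noteq> E" using lt tree_lt_irrefl[OF tree_T] by blast
  moreover have "\<not> incomparable T (zero D) (zero E)"
    using lt unfolding incomparable_def le_def by blast
  moreover have "\<not> le T m (zero D)" if "m \<in> maxT E" for m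
    using tree_le_lt_trans[OF tree_T _
        tree_lt_trans[OF tree_T lt graft.zero_lt_maxT[OF graft_member[OF E] that]]]
      tree_lt_irrefl[OF tree_T] by blast
  ultimately show ?thesis using zeros_related[OF D E] by blast
qed

lemma supp_iff: "y \<in> S \<longleftrightarrow> y \<in> nodes T \<and> (\<forall>G\<in>\<Gamma>. y \<notin> expl T G)"
  unfolding supp_def by blast

lemma supp_in_T: "y \<in> S \<Longrightarrow> y \<in> nodes T"
  unfolding supp_iff by blast

lemma supp_not_impl: "y \<in> S \<Longrightarrow> G \<in> \<Gamma> \<Longrightarrow> y \<notin> impl G"
  using supp_in_T graft.impl_not_in_T[OF graft_member] by blast

lemma supp_above_zero: "y \<in> S \<Longrightarrow> G \<in> \<Gamma> \<Longrightarrow> lt T (zero G) y \<Longrightarrow> \<exists>m\<in>maxT G. le T m y"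
  unfolding supp_iff expl_def upclosure_def by blast

lemma supp_not_below_maxT:
  assumes y: "y \<in> S" and G: "G \<in> \<Gamma>" and m: "m \<in> maxT G" and "lt T (zero G) y"
  shows "\<not> lt T y m"
proof
  assume ym: "lt T y m"
  obtain m' where m': "m' \<in> maxT G" "le T m' y" using supp_above_zero[OF y G] assms(4) by blast
  then have "lt T m' m" using tree_le_lt_trans[OF tree_T _ ym] by blast
  then show False
    using graft.maxT_antichain[OF graft_member[OF G] m'(1) m lt_imp_le] tree_lt_irrefl[OF tree_T]
    by blast
qed

lemma zero_in_supp:
  assumes G: "G \<in> \<Gamma>"
  shows "zero G \<in> S"
proof -
  have "zero G \<notin> expl T E" if E: "E \<in> \<Gamma>" for E
    using zero_lt_zero[OF E G] unfolding expl_def upclosure_def by blast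
  then show ?thesis using graft.zero_in_T[OF graft_member[OF G]] supp_iff by blast
qed

lemma maxT_in_supp:
  assumes G: "G \<in> \<Gamma>" and m: "m \<in> maxT G"
  shows "m \<in> S"
proof -
  have "m \<notin> expl T E" if E: "E \<in> \<Gamma>" for E
  proof
    assume "m \<in> expl T E"
    then have Em: "lt T (zero E) m" and not_up: "\<forall>a\<in>maxT E. \<not> le T a m"
      unfolding expl_def upclosure_def by auto
    have Gm: "lt T (zero G) m" using graft.zero_lt_maxT[OF graft_member[OF G] m] .
    have "E \<noteq> G" using not_up m le_refl[OF graft.maxT_in_T[OF graft_member[OF G] m]] by blast
    then have "zero E \<noteq> zero G" using zero_inj[OF E G] by blast
    then consider "lt T (zero E) (zero G)" | "lt T (zero G) (zero E)"
      using tree_pred_linear[OF tree_T Em Gm] by blast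
    then show False
    proof cases
      case 1
      then obtain a where "a \<in> maxT E" "le T a (zero G)" using zero_lt_zero[OF E G] by blast
      then show False using not_up lt_imp_le[OF tree_le_lt_trans[OF tree_T _ Gm]] by blast
    next
      case 2
      then obtain a where a: "a \<in> maxT G" "le T a (zero E)" using zero_lt_zero[OF G E] by blast
      then have "lt T a m" using tree_le_lt_trans[OF tree_T _ Em] by blast
      then show False
        using graft.maxT_antichain[OF graft_member[OF G] a(1) m lt_imp_le] tree_lt_irrefl[OF tree_T]
        by blast
    qed
  qed
  then show ?thesis using graft.maxT_in_T[OF graft_member[OF G] m] supp_iff by blast
qed

lemma nodes_hybr: "nodes H = S \<union> (\<Union>G\<in>\<Gamma>. impl G)"
  unfolding hybr_def nodes_def by simp

lemma lt_hybr: "lt H x y \<longleftrightarrow>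
    (x \<in> S \<and> y \<in> S \<and> lt T x y) \<or>
    (\<exists>G\<in>\<Gamma>. x \<in> impl G \<and> y \<in> impl G \<and> lt G x y) \<or>
    (\<exists>G\<in>\<Gamma>. x \<in> S \<and> y \<in> impl G \<and> le T x (zero G)) \<or>
    (\<exists>G\<in>\<Gamma>. x \<in> impl G \<and> y \<in> S \<and> y \<in> upclosure (maxT G) T \<and>
             lt G x (root T y (maxT G))) \<or>
    (\<exists>D\<in>\<Gamma>. \<exists>E\<in>\<Gamma>. D \<noteq> E \<and> x \<in> impl D \<and> y \<in> impl E \<and>
             zero E \<in> upclosure (maxT D) T \<and> lt D x (root T (zero E) (maxT D)))"
  unfolding hybr_def lt_def by simp

lemma lt_hybr_nodes: "lt H x y \<Longrightarrow> x \<in> nodes H \<and> y \<in> nodes H"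
  unfolding lt_hybr nodes_hybr by blast

lemma supp_lt_hybr_iff:
  "x \<in> S \<Longrightarrow> lt H x y \<longleftrightarrow> (y \<in> S \<and> lt T x y) \<or> (\<exists>G\<in>\<Gamma>. y \<in> impl G \<and> le T x (zero G))"
  unfolding lt_hybr using supp_not_impl by blast

lemma supp_le_hybr_iff:
  "x \<in> S \<Longrightarrow> le H x y \<longleftrightarrow> (y \<in> S \<and> le T x y) \<or> (\<exists>G\<in>\<Gamma>. y \<in> impl G \<and> le T x (zero G))"
  unfolding le_def supp_lt_hybr_iff nodes_hybr using supp_in_T by blast

lemma supp_le_hybr_impl:
  assumes m: "m \<in> S" and D: "D \<in> \<Gamma>" and x: "x \<in> impl D" and mx: "le H m x"
  shows "le T m (zero D)"
proof -
  obtain E where "E \<in> \<Gamma>" "x \<in> impl E" "le T m (zero E)"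
    using mx supp_le_hybr_iff[OF m] supp_not_impl[OF _ D] x by blast
  then show ?thesis using impl_disjoint[OF D _ x] by blast
qed

lemma impl_lt_hybrD:
  assumes D: "D \<in> \<Gamma>" and x: "x \<in> impl D" and xy: "lt H x y"
  shows "(y \<in> impl D \<and> lt D x y) \<or> (\<exists>m\<in>maxT D. lt D x m \<and> le H m y)"
  using xy unfolding lt_hybr
proof (elim disjE bexE conjE)
  note root = graft.root_eq[OF graft_member[OF D]]
  note le_iff = supp_le_hybr_iff[OF maxT_in_supp[OF D]]
  {
    fix G assume "G \<in> \<Gamma>" "x \<in> impl G" "y \<in> impl G" "lt G x y"
    then show ?thesis using impl_disjoint[OF D _ x] by blast
  next
    fix G assume "G \<in> \<Gamma>" "x \<in> impl G" "y \<in> S" "y \<in> upclosure (maxT G) T"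
      "lt G x (root T y (maxT G))"
    moreover from this have "G = D" using impl_disjoint[OF D _ x] by blast
    ultimately obtain m where "m \<in> maxT D" "le T m y" "lt D x m"
      using root unfolding upclosure_def by blast
    then show ?thesis using \<open>y \<in> S\<close> le_iff by blast
  next
    fix D' E assume "D' \<in> \<Gamma>" "E \<in> \<Gamma>" "x \<in> impl D'" "y \<in> impl E"
      "zero E \<in> upclosure (maxT D') T" "lt D' x (root T (zero E) (maxT D'))"
    moreover from this have "D' = D" using impl_disjoint[OF D _ x] by blast
    ultimately obtain m where "m \<in> maxT D" "le T m (zero E)" "lt D x m"
      using root unfolding upclosure_def by blast
    then show ?thesis using \<open>E \<in> \<Gamma>\<close> \<open>y \<in> impl E\<close> le_iff by blast
  }
qed (use supp_not_impl[OF _ D] x in blast)+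

lemma impl_lt_hybr_via_maxT:
  assumes D: "D \<in> \<Gamma>" and x: "x \<in> impl D" and m: "m \<in> maxT D" and xm: "lt D x m"
    and my: "le H m y"
  shows "lt H x y"
proof -
  have root: "root T v (maxT D) = m" if "le T m v" for v
    using graft.root_eq[OF graft_member[OF D] m that] .
  have up: "v \<in> upclosure (maxT D) T" if "le T m v" for v
    using m that unfolding upclosure_def by blast
  consider "y \<in> S" "le T m y" | E where "E \<in> \<Gamma>" "y \<in> impl E" "le T m (zero E)"
    using my supp_le_hybr_iff[OF maxT_in_supp[OF D m]] by blast
  then show ?thesis
  proof cases
    case 1
    then have "\<exists>G\<in>\<Gamma>. x \<in> impl G \<and> y \<in> S \<and> y \<in> upclosure (maxT G) T \<and>
        lt G x (root T y (maxT G))"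
      using D x xm root up by auto
    then show ?thesis unfolding lt_hybr by blast
  next
    case (2 E)
    have "E \<noteq> D" using 2(3) graft.maxT_not_le_zero[OF graft_member[OF D] m] by blast
    then have "\<exists>D\<in>\<Gamma>. \<exists>E\<in>\<Gamma>. D \<noteq> E \<and> x \<in> impl D \<and> y \<in> impl E \<and>
        zero E \<in> upclosure (maxT D) T \<and> lt D x (root T (zero E) (maxT D))"
      using D x 2 xm root up by (intro bexI[of _ D] bexI[of _ E]) auto
    then show ?thesis unfolding lt_hybr by blast
  qed
qed

lemma impl_lt_hybr_iff:
  assumes D: "D \<in> \<Gamma>" and x: "x \<in> impl D"
  shows "lt H x y \<longleftrightarrow> (y \<in> impl D \<and> lt D x y) \<or> (\<exists>m\<in>maxT D. lt D x m \<and> le H m y)"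
proof -
  have "lt H x y" if "y \<in> impl D" "lt D x y" using that D x unfolding lt_hybr by blast
  then show ?thesis using impl_lt_hybrD[OF D x] impl_lt_hybr_via_maxT[OF D x] by blast
qed

lemma hybr_cases:
  assumes "x \<in> nodes H"
  obtains (supp) "x \<in> S" | (impl) G where "G \<in> \<Gamma>" "x \<in> impl G"
  using assms unfolding nodes_hybr by blast

lemma maxT_not_le_hybr_impl:
  assumes G: "G \<in> \<Gamma>" and m: "m \<in> maxT G" and v: "v \<in> impl G"
  shows "\<not> le H m v"
  using supp_le_hybr_impl[OF maxT_in_supp[OF G m] G v] graft.maxT_not_le_zero[OF graft_member[OF G] m]
  by blast

lemma hybr_lt_irrefl: "\<not> lt H x x"
proof
  assume xx: "lt H x x"
  then have "x \<in> nodes H" using lt_hybr_nodes by blast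
  then show False
  proof (cases rule: hybr_cases)
    case supp
    then show False
      using xx supp_lt_hybr_iff supp_not_impl tree_lt_irrefl[OF tree_T] by blast
  next
    case (impl G)
    then show False
      using xx impl_lt_hybrD[OF impl] tree_lt_irrefl[OF graft.tree_G[OF graft_member[OF impl(1)]]]
        maxT_not_le_hybr_impl[OF impl(1) _ impl(2)] by blast
  qed
qed

lemma hybr_lt_trans_supp_supp:
  assumes x: "x \<in> S" and y: "y \<in> S" and xy: "lt H x y" and yz: "lt H y z"
  shows "lt H x z"
proof -
  have "lt T x y" using xy supp_lt_hybr_iff[OF x] supp_not_impl[OF y] by blast
  from yz consider "z \<in> S" "lt T y z" | G where "G \<in> \<Gamma>" "z \<in> impl G" "le T y (zero G)"
    using supp_lt_hybr_iff[OF y] by blast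
  then show ?thesis
  proof cases
    case 1
    then show ?thesis using supp_lt_hybr_iff[OF x] tree_lt_trans[OF tree_T \<open>lt T x y\<close>] by blast
  next
    case (2 G)
    then show ?thesis
      using supp_lt_hybr_iff[OF x] lt_imp_le[OF tree_lt_le_trans[OF tree_T \<open>lt T x y\<close>]] by blast
  qed
qed

lemma hybr_lt_trans_supp:
  assumes x: "x \<in> S" and xy: "lt H x y" and yz: "lt H y z"
  shows "lt H x z"
proof -
  from xy consider (supp) "y \<in> S" | (impl) G where "G \<in> \<Gamma>" "y \<in> impl G" "le T x (zero G)"
    using supp_lt_hybr_iff[OF x] by blast
  then show ?thesis
  proof cases
    case supp
    then show ?thesis using hybr_lt_trans_supp_supp[OF x _ xy yz] by blast
  next
    case (impl G)
    from yz consider (inside) "z \<in> impl G" | (exit) m where "m \<in> maxT G" "lt G y m" "le H m z"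
      using impl_lt_hybrD[OF impl(1,2)] by blast
    then show ?thesis
    proof cases
      case inside
      then show ?thesis using supp_lt_hybr_iff[OF x] impl by blast
    next
      case (exit m)
      have m: "m \<in> S" using maxT_in_supp[OF impl(1) exit(1)] .
      have "lt T x m"
        using tree_le_lt_trans[OF tree_T impl(3)
            graft.zero_lt_maxT[OF graft_member[OF impl(1)] exit(1)]] .
      then have "lt H x m" using supp_lt_hybr_iff[OF x] m by blast
      then show ?thesis using exit(3) hybr_lt_trans_supp_supp[OF x m] unfolding le_def by blast
    qed
  qed
qed

lemma hybr_lt_trans:
  assumes xy: "lt H x y" and yz: "lt H y z"
  shows "lt H x z"
proof -
  have "x \<in> nodes H" using lt_hybr_nodes[OF xy] by blast
  then show ?thesis
  proof (cases rule: hybr_cases)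
    case supp
    then show ?thesis using hybr_lt_trans_supp[OF _ xy yz] by blast
  next
    case (impl D)
    note x_iff = impl_lt_hybr_iff[OF impl]
    from xy consider (inside) "y \<in> impl D" "lt D x y"
      | (exit) m where "m \<in> maxT D" "lt D x m" "le H m y"
      using impl_lt_hybrD[OF impl] by blast
    then show ?thesis
    proof cases
      case inside
      from yz consider "z \<in> impl D" "lt D y z" | m where "m \<in> maxT D" "lt D y m" "le H m z"
        using impl_lt_hybrD[OF impl(1) inside(1)] by blast
      then show ?thesis
        using x_iff tree_lt_trans[OF graft.tree_G[OF graft_member[OF impl(1)]] inside(2)]
        by cases blast+
    next
      case (exit m)
      have "le H m z"
        using exit(3) yz hybr_lt_trans_supp[OF maxT_in_supp[OF impl(1) exit(1)]]
        unfolding le_def by (metis lt_hybr_nodes)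
      then show ?thesis using x_iff exit(1,2) by blast
    qed
  qed
qed

lemma supp_hybr_le_common_comparable:
  assumes u: "u \<in> S" and v: "v \<in> S" and ux: "le H u x" and vx: "le H v x"
  shows "le T u v \<or> le T v u"
proof (cases "x \<in> S")
  case True
  then have "le T u x" "le T v x"
    using ux vx supp_le_hybr_iff[OF u] supp_le_hybr_iff[OF v] supp_not_impl[OF True] by blast+
  then show ?thesis using tree_pred_le_linear[OF tree_T] by blast
next
  case False
  obtain G where G: "G \<in> \<Gamma>" "x \<in> impl G" "le T u (zero G)"
    using ux supp_le_hybr_iff[OF u] False by blast
  obtain E where E: "E \<in> \<Gamma>" "x \<in> impl E" "le T v (zero E)"
    using vx supp_le_hybr_iff[OF v] False by blast
  have "G = E" using impl_disjoint[OF G(1) E(1) G(2) E(2)] .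
  then show ?thesis using G(3) E(3) tree_pred_le_linear[OF tree_T] by blast
qed

lemma supp_impl_hybr_comparable:
  assumes y: "y \<in> S" and E: "E \<in> \<Gamma>" and z: "z \<in> impl E" and yx: "lt H y x" and zx: "lt H z x"
  shows "lt H y z \<or> lt H z y"
proof -
  note y_iff = supp_lt_hybr_iff[OF y]
  from zx consider (inside) "x \<in> impl E" | (exit) m where "m \<in> maxT E" "lt E z m" "le H m x"
    using impl_lt_hybrD[OF E z] by blast
  then show ?thesis
  proof cases
    case inside
    then show ?thesis using supp_le_hybr_impl[OF y E inside lt_imp_le[OF yx]] y_iff E z by blast
  next
    case (exit m)
    have m: "m \<in> S" using maxT_in_supp[OF E exit(1)] .
    have "le T y m \<or> le T m y"
      using supp_hybr_le_common_comparable[OF y m lt_imp_le[OF yx] exit(3)] .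
    moreover have "lt H z y" if "le T m y"
    proof -
      have "le H m y" using supp_le_hybr_iff[OF m] y that by blast
      then show ?thesis using impl_lt_hybr_via_maxT[OF E z exit(1,2)] by blast
    qed
    moreover have "lt H y z" if "lt T y m"
    proof -
      have "\<not> lt T (zero E) y"
        using supp_not_below_maxT[OF y E exit(1)] that by blast
      moreover have "y = zero E \<or> lt T y (zero E) \<or> lt T (zero E) y"
        using tree_pred_linear[OF tree_T that graft.zero_lt_maxT[OF graft_member[OF E] exit(1)]] .
      ultimately have "le T y (zero E)"
        unfolding le_def using supp_in_T[OF y] by blast
      then show ?thesis using y_iff E z by blast
    qed
    ultimately show ?thesis unfolding le_def by blast
  qed
qed

lemma impl_lt_hybr_impl:
  assumes E: "E \<in> \<Gamma>" and z: "z \<in> impl E" and m: "m \<in> maxT E" and zm: "lt E z m"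
    and D: "D \<in> \<Gamma>" and y: "y \<in> impl D" and mD: "le T m (zero D)"
  shows "lt H z y"
proof -
  have "lt H m y" using supp_lt_hybr_iff[OF maxT_in_supp[OF E m]] D y mD by blast
  then show ?thesis using impl_lt_hybr_via_maxT[OF E z m zm lt_imp_le] by blast
qed

lemma impl_hybr_comparable_same_graft:
  assumes D: "D \<in> \<Gamma>" and y: "y \<in> impl D" and z: "z \<in> impl D"
    and yw: "lt D y w" and zw: "lt D z w"
  shows "y = z \<or> lt H y z \<or> lt H z y"
  using tree_pred_linear[OF graft.tree_G[OF graft_member[OF D]] yw zw]
    impl_lt_hybr_iff[OF D y] impl_lt_hybr_iff[OF D z] y z by blast

lemma impl_hybr_comparable_below_maxT:
  assumes D: "D \<in> \<Gamma>" and y: "y \<in> impl D" and m: "m \<in> maxT D" and ym: "lt D y m"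
    and E: "E \<in> \<Gamma>" and z: "z \<in> impl E" and m': "m' \<in> maxT E" and zm': "lt E z m'"
    and mm': "le T m m'"
  shows "y = z \<or> lt H y z \<or> lt H z y"
proof (cases "D = E")
  case True
  then have "m = m'" using graft.maxT_antichain[OF graft_member[OF D] m _ mm'] m' by blast
  then show ?thesis using impl_hybr_comparable_same_graft[OF D y _ ym] z zm' True by blast
next
  case False
  have Dm': "lt T (zero D) m'"
    using tree_lt_le_trans[OF tree_T graft.zero_lt_maxT[OF graft_member[OF D] m] mm'] .
  have Em': "lt T (zero E) m'" using graft.zero_lt_maxT[OF graft_member[OF E] m'] .
  have "zero D \<noteq> zero E" using zero_inj[OF D E] False by blast
  then consider "lt T (zero D) (zero E)" | "lt T (zero E) (zero D)"
    using tree_pred_linear[OF tree_T Dm' Em'] by blast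
  then show ?thesis
  proof cases
    case 1
    then obtain n where n: "n \<in> maxT D" "le T n (zero E)" using zero_lt_zero[OF D E] by blast
    have "le T n m'" using lt_imp_le[OF tree_le_lt_trans[OF tree_T n(2) Em']] .
    then have "n = m" using graft.maxT_below_unique[OF graft_member[OF D] n(1) m _ mm'] by blast
    then show ?thesis using impl_lt_hybr_impl[OF D y m ym E z] n(2) by blast
  next
    case 2
    then obtain n where n: "n \<in> maxT E" "le T n (zero D)" using zero_lt_zero[OF E D] by blast
    have "le T n m'" using lt_imp_le[OF tree_le_lt_trans[OF tree_T n(2) Dm']] .
    then have "n = m'" using graft.maxT_antichain[OF graft_member[OF E] n(1) m'] by blast
    then show ?thesis using impl_lt_hybr_impl[OF E z m' zm' D y] n(2) by blast
  qed
qed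

lemma impl_hybr_comparable:
  assumes D: "D \<in> \<Gamma>" and y: "y \<in> impl D" and E: "E \<in> \<Gamma>" and z: "z \<in> impl E"
    and yx: "lt H y x" and zx: "lt H z x"
  shows "y = z \<or> lt H y z \<or> lt H z y"
proof -
  from yx consider (y_inside) "x \<in> impl D" "lt D y x"
    | (y_exit) m where "m \<in> maxT D" "lt D y m" "le H m x"
    using impl_lt_hybrD[OF D y] by blast
  note y_cases = this
  from zx consider (z_inside) "x \<in> impl E" "lt E z x"
    | (z_exit) m' where "m' \<in> maxT E" "lt E z m'" "le H m' x"
    using impl_lt_hybrD[OF E z] by blast
  then show ?thesis
  proof cases
    case z_inside
    show ?thesis
    proof (cases rule: y_cases)
      case y_inside
      then have "E = D" using impl_disjoint[OF E D z_inside(1)] by blast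
      then show ?thesis
        using impl_hybr_comparable_same_graft[OF D y _ y_inside(2)] z z_inside(2) by blast
    next
      case (y_exit m)
      then show ?thesis
        using impl_lt_hybr_impl[OF D y y_exit(1,2) E z]
          supp_le_hybr_impl[OF maxT_in_supp[OF D y_exit(1)] E z_inside(1) y_exit(3)] by blast
    qed
  next
    case (z_exit m')
    show ?thesis
    proof (cases rule: y_cases)
      case y_inside
      then show ?thesis
        using impl_lt_hybr_impl[OF E z z_exit(1,2) D y]
          supp_le_hybr_impl[OF maxT_in_supp[OF E z_exit(1)] D y_inside(1) z_exit(3)] by blast
    next
      case (y_exit m)
      have "le T m m' \<or> le T m' m"
        using supp_hybr_le_common_comparable[OF maxT_in_supp[OF D y_exit(1)]
            maxT_in_supp[OF E z_exit(1)] y_exit(3) z_exit(3)] .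
      then show ?thesis
        using impl_hybr_comparable_below_maxT[OF D y y_exit(1,2) E z z_exit(1,2)]
          impl_hybr_comparable_below_maxT[OF E z z_exit(1,2) D y y_exit(1,2)] by blast
    qed
  qed
qed

lemma hybr_pred_linear:
  assumes yx: "lt H y x" and zx: "lt H z x"
  shows "y = z \<or> lt H y z \<or> lt H z y"
proof -
  have "y \<in> nodes H" "z \<in> nodes H" using lt_hybr_nodes yx zx by blast+
  then consider (supp_supp) "y \<in> S" "z \<in> S"
    | (supp_impl) E where "y \<in> S" "E \<in> \<Gamma>" "z \<in> impl E"
    | (impl_supp) D where "D \<in> \<Gamma>" "y \<in> impl D" "z \<in> S"
    | (impl_impl) D E where "D \<in> \<Gamma>" "y \<in> impl D" "E \<in> \<Gamma>" "z \<in> impl E"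
    by (elim hybr_cases) blast+
  then show ?thesis
  proof cases
    case supp_supp
    then have "le T y z \<or> le T z y"
      using supp_hybr_le_common_comparable lt_imp_le[OF yx] lt_imp_le[OF zx] by blast
    then show ?thesis using supp_lt_hybr_iff supp_supp unfolding le_def by blast
  next
    case (supp_impl E)
    then show ?thesis using supp_impl_hybr_comparable[OF supp_impl yx zx] by blast
  next
    case (impl_supp D)
    then show ?thesis using supp_impl_hybr_comparable[OF impl_supp(3,1,2) zx yx] by blast
  next
    case (impl_impl D E)
    show ?thesis by (rule impl_hybr_comparable[OF impl_impl yx zx])
  qed
qed

lemma graft_nodes_hybr:
  assumes G: "G \<in> \<Gamma>"
  shows "nodes G \<subseteq> nodes H"
  using graft.nodes_cases[OF graft_member[OF G]] zero_in_supp[OF G] maxT_in_supp[OF G] G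
  unfolding nodes_hybr by blast

lemma graft_lt_imp_hybr_lt:
  assumes G: "G \<in> \<Gamma>" and u: "u \<in> nodes G" and v: "v \<in> nodes G" and uv: "lt G u v"
  shows "lt H u v"
proof -
  interpret graft T G using graft_member[OF G] .
  have v_ne_zero: "v \<noteq> zero G" using uv zero_lt[OF u] tree_lt_asym[OF tree_G, of u v] by blast
  consider "u = zero G" | "u \<in> impl G"
    using nodes_cases[OF u] maxT_not_lt[of u G v] uv by blast
  then show ?thesis
  proof cases
    case 1
    have "v \<in> S \<and> lt T (zero G) v \<or> v \<in> impl G \<and> le T (zero G) (zero G)"
      using nodes_cases[OF v] v_ne_zero maxT_in_supp[OF G] zero_lt_maxT le_refl[OF zero_in_T]
      by blast
    then show ?thesis using supp_lt_hybr_iff[OF zero_in_supp[OF G]] G 1 by blast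
  next
    case 2
    have "le H v v" using le_refl[of v H] graft_nodes_hybr[OF G] v by blast
    then show ?thesis
      using nodes_cases[OF v] v_ne_zero impl_lt_hybr_iff[OF G 2] uv by blast
  qed
qed

lemma hybr_lt_graft_iff:
  assumes G: "G \<in> \<Gamma>" and u: "u \<in> nodes G" and v: "v \<in> nodes G"
  shows "lt H u v \<longleftrightarrow> lt G u v"
proof
  interpret graft T G using graft_member[OF G] .
  assume uv: "lt H u v"
  have "u \<noteq> v" using uv hybr_lt_irrefl by blast
  have v_ne_zero: "v \<noteq> zero G"
  proof
    assume "v = zero G"
    then have "lt H v u" using graft_lt_imp_hybr_lt[OF G v u] zero_lt[OF u] \<open>u \<noteq> v\<close> by blast
    then show False using hybr_lt_trans[OF uv] hybr_lt_irrefl by blast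
  qed
  have v_maxT: "v \<in> maxT G" if "m \<in> maxT G" "le H m v" for m
    using nodes_cases[OF v] v_ne_zero maxT_not_le_hybr_impl[OF G that(1)] that(2) by blast
  have maxT_le: "le T m v" if "m \<in> maxT G" "le H m v" for m
    using that supp_le_hybr_iff[OF maxT_in_supp[OF G that(1)]]
      supp_not_impl[OF maxT_in_supp[OF G v_maxT[OF that]]]
    by blast
  consider "u = zero G" | "u \<in> maxT G" | "u \<in> impl G" using nodes_cases[OF u] by blast
  then show "lt G u v"
  proof cases
    case 1
    then show ?thesis using zero_lt[OF v] \<open>u \<noteq> v\<close> by blast
  next
    case 2
    then show ?thesis
      using maxT_antichain[OF 2 v_maxT maxT_le] lt_imp_le[OF uv] \<open>u \<noteq> v\<close> by blast
  next
    case 3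
    from uv consider "v \<in> impl G" "lt G u v" | (exit) m where "m \<in> maxT G" "lt G u m" "le H m v"
      using impl_lt_hybrD[OF G 3] by blast
    then show ?thesis
    proof cases
      case (exit m)
      then show ?thesis using maxT_antichain[OF exit(1) v_maxT maxT_le] by blast
    qed
  qed
qed (rule graft_lt_imp_hybr_lt[OF G u v])

lemma hybr_le_graft_iff:
  assumes G: "G \<in> \<Gamma>" and u: "u \<in> nodes G" and v: "v \<in> nodes G"
  shows "le H u v \<longleftrightarrow> le G u v"
  using hybr_lt_graft_iff[OF G u v] graft_nodes_hybr[OF G] u unfolding le_def by blast

lemma hybr_lt_leave_graft:
  assumes G: "G \<in> \<Gamma>" and a: "a \<in> nodes G" and b: "b \<notin> nodes G" and ab: "lt H a b"
  shows "\<exists>m\<in>maxT G. le G a m \<and> lt H m b"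
proof -
  interpret graft T G using graft_member[OF G] .
  consider "a = zero G" | "a \<in> maxT G" | "a \<in> impl G" using nodes_cases[OF a] by blast
  then show ?thesis
  proof cases
    case 1
    have zero_le: "le G (zero G) m" if "m \<in> maxT G" for m
      using zero_least maxT_nodes[OF that] by blast
    from ab consider (supp) "b \<in> S" "lt T (zero G) b"
      | (impl) E where "E \<in> \<Gamma>" "b \<in> impl E" "le T (zero G) (zero E)"
      using supp_lt_hybr_iff[OF zero_in_supp[OF G]] 1 by blast
    then show ?thesis
    proof cases
      case supp
      then obtain m where m: "m \<in> maxT G" "le T m b" using supp_above_zero[OF _ G] by blast
      moreover have "m \<noteq> b" using maxT_nodes[OF m(1)] b by blast
      ultimately have "lt H m b"
        using supp_lt_hybr_iff[OF maxT_in_supp[OF G m(1)]] supp(1) unfolding le_def by blast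
      then show ?thesis using m(1) zero_le \<open>a = zero G\<close> by blast
    next
      case (impl E)
      have "E \<noteq> G" using impl_nodes[OF impl(2)] b by blast
      then have "lt T (zero G) (zero E)"
        using impl(3) zero_inj[OF G impl(1)] unfolding le_def by blast
      then obtain m where m: "m \<in> maxT G" "le T m (zero E)"
        using zero_lt_zero[OF G impl(1)] by blast
      then have "lt H m b" using supp_lt_hybr_iff[OF maxT_in_supp[OF G m(1)]] impl(1,2) by blast
      then show ?thesis using m(1) zero_le \<open>a = zero G\<close> by blast
    qed
  next
    case 2
    then show ?thesis using ab le_refl[OF a] by blast
  next
    case 3
    have "b \<notin> impl G" using impl_nodes[of b G] b by blast
    then obtain m where "m \<in> maxT G" "lt G a m" "le H m b"
      using ab impl_lt_hybr_iff[OF G 3] by blast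
    moreover have "m \<noteq> b" using maxT_nodes[OF \<open>m \<in> maxT G\<close>] b by blast
    ultimately show ?thesis unfolding le_def by blast
  qed
qed

section \<open>Branches of the hybrid\<close>

lemma hybr_branch_downward_closed: "branch H B \<Longrightarrow> b \<in> B \<Longrightarrow> lt H a b \<Longrightarrow> a \<in> B"
  by (rule branch_downward_closed[of H, OF hybr_lt_trans hybr_pred_linear]) 
    (use lt_hybr_nodes in blast)+

lemma hybr_branch_graft_memI:
  assumes B: "branch H B" and G: "G \<in> \<Gamma>" and a: "a \<in> B \<inter> nodes G" and c: "c \<in> nodes G"
    and cmp: "\<forall>x\<in>B \<inter> nodes G. le G x c \<or> le G c x"
  shows "c \<in> B"
proof (rule ccontr)
  assume "c \<notin> B"
  have cH: "c \<in> nodes H" using graft_nodes_hybr[OF G] c by blast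
  then obtain b where b: "b \<in> B" "\<not> le H b c" "\<not> le H c b"
    using branch_memI[OF B cH] \<open>c \<notin> B\<close> by blast
  have le_iff: "le H x y \<longleftrightarrow> le G x y" if "x \<in> nodes G" "y \<in> nodes G" for x y
    using hybr_le_graft_iff[OF G that] .
  have "\<not> le G c a"
    using le_iff a c hybr_branch_downward_closed[OF B] \<open>c \<notin> B\<close> unfolding le_def by blast
  then have "lt H a c"
    using cmp a le_iff[of a c] c hybr_lt_graft_iff[OF G, of a c] unfolding le_def by blast
  moreover have "le H b a \<or> le H a b" using B a b(1) unfolding branch_def chain_def by blast
  ultimately have ab: "lt H a b" using b(2) hybr_lt_trans[of b a c] unfolding le_def by blast
  have "b \<notin> nodes G" using cmp b le_iff c by blast
  then obtain m where m: "m \<in> maxT G" "lt H m b"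
    using hybr_lt_leave_graft[OF G _ _ ab] a by blast
  have "m \<in> B \<inter> nodes G"
    using hybr_branch_downward_closed[OF B b(1) m(2)] maxT_nodes[OF m(1)] by blast
  then have "le G c m" using cmp maxT_not_lt[OF m(1)] unfolding le_def by blast
  then have "lt H c b"
    using le_iff[OF c maxT_nodes[OF m(1)]] m(2) hybr_lt_trans[of c m b] unfolding le_def by blast
  then show False using b(3) unfolding le_def by blast
qed

lemma hybr_branch_inter_graft:
  assumes B: "branch H B" and G: "G \<in> \<Gamma>" and ne: "B \<inter> nodes G \<noteq> {}"
  shows "branch G (B \<inter> nodes G)"
  unfolding branch_def
proof (intro conjI allI impI)
  show "chain G (B \<inter> nodes G)"
    using B hybr_le_graft_iff[OF G] unfolding branch_def chain_def by blast
  fix C assume C: "chain G C" and sub: "B \<inter> nodes G \<subseteq> C"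
  obtain a where a: "a \<in> B \<inter> nodes G" using ne by blast
  have "c \<in> B" if "c \<in> C" for c
    using hybr_branch_graft_memI[OF B G a] C sub that unfolding chain_def by blast
  then show "C = B \<inter> nodes G" using C sub unfolding chain_def by blast
qed

lemma hybr_branch_cofinal_supp:
  assumes B: "branch H B" and bounded: "\<forall>G\<in>\<Gamma>. bounded_chains G" and b: "b \<in> B"
  shows "\<exists>c\<in>B \<inter> S. le H b c"
proof -
  have "chain H B" using B unfolding branch_def by blast
  then have "b \<in> nodes H" using b unfolding chain_def by blast
  then show ?thesis
  proof (cases rule: hybr_cases)
    case supp
    then show ?thesis using b le_refl[OF \<open>b \<in> nodes H\<close>] by (intro bexI[of _ b]) blast+
  next
    case (impl G)
    interpret graft T G using graft_member[OF impl(1)] .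
    have bG: "b \<in> nodes G" using impl_nodes[OF impl(2)] by blast
    have br: "branch G (B \<inter> nodes G)" using hybr_branch_inter_graft[OF B impl(1)] b bG by blast
    then have "chain G (B \<inter> nodes G)" unfolding branch_def by blast
    moreover have "bounded_chains G" using bounded impl(1) by blast
    ultimately obtain z where z: "z \<in> nodes G" "\<forall>c\<in>B \<inter> nodes G. le G c z"
      using b bG unfolding bounded_chains_def by blast
    have "z \<in> B" "z \<in> maxT G" using branch_upper_bound_maxT[OF tree_G br z(1) z(2)] by blast+
    moreover have "le H b z" using hybr_le_graft_iff[OF impl(1) bG z(1)] z(2) b bG by blast
    ultimately show ?thesis using maxT_in_supp[OF impl(1)] by (intro bexI[of _ z]) blast+
  qed
qed

end

theorem mainTheorem9:
  fixes T :: "'a tree" and \<gamma> :: "'a tree set" and B :: "'a set"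
  assumes "is_tree T"
    and "consistent T \<gamma>"
    and "branch (hybr T \<gamma>) B"
  shows "(\<forall>G\<in>\<gamma>. B \<inter> nodes G \<noteq> {} \<longrightarrow> branch G (B \<inter> nodes G))
    \<and> ((\<forall>G\<in>\<gamma>. bounded_chains G) \<longrightarrow>
         (\<forall>b\<in>B. \<exists>c\<in>B \<inter> supp T \<gamma>. le (hybr T \<gamma>) b c))"
proof -
  interpret hybrid T \<gamma> using assms(1,2) by unfold_locales
  show ?thesis
    using hybr_branch_inter_graft[OF assms(3)] hybr_branch_cofinal_supp[OF assms(3)] by simp
qed

end
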